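(* Let $d\ge1$ and let $y=(y_S)_{S\in\mathcal{V}_{n,2d}}$ be a vector over $\mathbb{F}_q$. Suppose $H_d(y)$ is nonzero and $\operatorname{rank}H_d(y)\le d$. Then there exists $e\in\{0,1,\dots,d-1\}$ such that $r_e=r_{e+1}>0$.
   Context: $\mathbb{F}_q$ is a finite field. $\mathcal{V}_{n,j}:=\{S\subseteq\{1,\dots,n\}:0\le|S|\le j\}$ (including $\emptyset$). For $0\le e\le d$, $H_e(y)$ is the matrix with rows and columns indexed by $\mathcal{V}_{n,e}$ and $(S,T)$ entry $y_{S\cup T}$, and $r_e:=\operatorname{rank}H_e(y)$. *)

theory Defs
  imports Main
begin

definition Vset :: "nat \<Rightarrow> nat \<Rightarrow> nat set set" where
  "Vset n j = {S. S \<subseteq> {1..n} \<and> card S \<le> j}"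

definition cols_independent :: "'r set \<Rightarrow> ('r \<Rightarrow> 'c \<Rightarrow> 'a::field) \<Rightarrow> 'c set \<Rightarrow> bool" where
  "cols_independent R M J \<longleftrightarrow>
     (\<forall>a :: 'c \<Rightarrow> 'a. (\<forall>S\<in>R. (\<Sum>T\<in>J. a T * M S T) = 0) \<longrightarrow> (\<forall>T\<in>J. a T = 0))"

definition mat_rank :: "'r set \<Rightarrow> 'c set \<Rightarrow> ('r \<Rightarrow> 'c \<Rightarrow> 'a::field) \<Rightarrow> nat" where
  "mat_rank R C M = Max {card J | J. J \<subseteq> C \<and> cols_independent R M J}"

definition H :: "nat \<Rightarrow> nat \<Rightarrow> (nat set \<Rightarrow> 'a::field) \<Rightarrow> nat set \<Rightarrow> nat set \<Rightarrow> 'a" where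
  "H n e y = (\<lambda>S T. y (S \<union> T))"

definition hrank :: "nat \<Rightarrow> nat \<Rightarrow> (nat set \<Rightarrow> 'a::field) \<Rightarrow> nat" where
  "hrank n e y = mat_rank (Vset n e) (Vset n e) (H n e y)"

end

theory Submission
  imports Defs
begin

text \<open>Let y (S \<union> T) be a nonzero entry of H_d(y) and choose U \<subseteq> S \<union> T inclusion-minimal with
  y U \<noteq> 0, so |U| \<le> 2d. Pair each column T \<subseteq> U with the row U - T: the entry y((U - T) \<union> T')
  is y U \<noteq> 0 if T \<subseteq> T', and 0 otherwise, since (U - T) \<union> T' is then a proper subset of U.
  Ordered by inclusion, any such columns thus carry a triangular submatrix with nonzero diagonal.
  Taking all T \<subseteq> U if |U| \<le> 1, and otherwise, for k = \<lceil>|U|/2\<rceil> and a fixed A \<subseteq> U of size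
  |U| - k - 1, the k + 1 sets U - (A \<union> {w}) with w \<in> U - A, gives r_k > k for some k \<le> d.
  As r_e is nondecreasing and r_d \<le> d, the ranks cannot increase strictly at every step from k to d.\<close>

lemma finite_Vset: "finite (Vset n e)"
  by (rule finite_subset[of _ "Pow {1..n}"]) (auto simp: Vset_def)

lemma Vset_mono: "e \<le> e' \<Longrightarrow> Vset n e \<subseteq> Vset n e'"
  unfolding Vset_def by auto

lemma finite_mat_rank_candidates:
  "finite C \<Longrightarrow> finite {card J | J. J \<subseteq> C \<and> cols_independent R M J}"
  by (rule finite_subset[of _ "card ` Pow C"]) auto

lemma card_le_mat_rank:
  assumes "finite C" "J \<subseteq> C" "cols_independent R M J"
  shows "card J \<le> mat_rank R C M"
  unfolding mat_rank_def using assms by (intro Max_ge finite_mat_rank_candidates) auto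

lemma mat_rank_attained:
  assumes "finite C"
  obtains J where "J \<subseteq> C" "cols_independent R M J" "card J = mat_rank R C M"
proof -
  let ?ranks = "{card J | J. J \<subseteq> C \<and> cols_independent R M J}"
  have "cols_independent R M {}"
    by (simp add: cols_independent_def)
  then have "card {} \<in> ?ranks"
    unfolding mem_Collect_eq by (intro exI[of _ "{}"]) simp
  then have "Max ?ranks \<in> ?ranks"
    using finite_mat_rank_candidates[OF assms] by (intro Max_in) auto
  then show thesis
    using that unfolding mat_rank_def by auto
qed

lemma cols_independent_mono_rows:
  "cols_independent R M J \<Longrightarrow> R \<subseteq> R' \<Longrightarrow> cols_independent R' M J"
  unfolding cols_independent_def by blast

lemma mat_rank_mono:
  assumes "R \<subseteq> R'" "C \<subseteq> C'" "finite C'"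
  shows "mat_rank R C M \<le> mat_rank R' C' M"
proof -
  obtain J where J: "J \<subseteq> C" "cols_independent R M J" "card J = mat_rank R C M"
    by (rule mat_rank_attained[OF finite_subset[OF assms(2,3)]])
  have "J \<subseteq> C'"
    using J(1) assms(2) by blast
  moreover have "cols_independent R' M J"
    using J(2) assms(1) by (rule cols_independent_mono_rows)
  ultimately show ?thesis
    using card_le_mat_rank[OF assms(3)] J(3) by metis
qed

lemma hrank_mono: "e \<le> e' \<Longrightarrow> hrank n e y \<le> hrank n e' y"
  unfolding hrank_def H_def by (intro mat_rank_mono Vset_mono finite_Vset)

lemma cols_independent_triangular:
  fixes J :: "'c::order set" and M :: "'r \<Rightarrow> 'c \<Rightarrow> 'a::field"
  assumes "finite J"
    and diag: "\<And>T. T \<in> J \<Longrightarrow> \<rho> T \<in> R \<and> M (\<rho> T) T \<noteq> 0"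
    and lower: "\<And>T T'. T \<in> J \<Longrightarrow> T' \<in> J \<Longrightarrow> \<not> T \<le> T' \<Longrightarrow> M (\<rho> T) T' = 0"
  shows "cols_independent R M J"
  unfolding cols_independent_def
proof (intro allI impI ballI, rule ccontr)
  fix a :: "'c \<Rightarrow> 'a" and T0
  assume rows: "\<forall>S\<in>R. (\<Sum>T'\<in>J. a T' * M S T') = 0" and "T0 \<in> J" "a T0 \<noteq> 0"
  have "finite {T \<in> J. a T \<noteq> 0}" "{T \<in> J. a T \<noteq> 0} \<noteq> {}"
    using \<open>finite J\<close> \<open>T0 \<in> J\<close> \<open>a T0 \<noteq> 0\<close> by auto
  then obtain T where T: "T \<in> J" "a T \<noteq> 0"
    and T_max: "\<forall>T' \<in> {T \<in> J. a T \<noteq> 0}. T \<le> T' \<longrightarrow> T = T'"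
    using finite_has_maximal by blast
  have "a T' * M (\<rho> T) T' = 0" if "T' \<in> J - {T}" for T'
    using that T_max lower[OF T(1)] by (cases "T \<le> T'") auto
  then have "(\<Sum>T'\<in>J - {T}. a T' * M (\<rho> T) T') = 0"
    by (rule sum.neutral[OF ballI])
  then have "(\<Sum>T'\<in>J. a T' * M (\<rho> T) T') = a T * M (\<rho> T) T"
    using sum.remove[OF \<open>finite J\<close> T(1), of "\<lambda>T'. a T' * M (\<rho> T) T'"] by simp
  moreover have "(\<Sum>T'\<in>J. a T' * M (\<rho> T) T') = 0"
    using rows diag T(1) by blast
  ultimately show False
    using diag T by simp
qed

lemma ex_minimal_nonzero_subset:
  assumes "finite U0" "y U0 \<noteq> 0"
  shows "\<exists>U\<subseteq>U0. y U \<noteq> 0 \<and> (\<forall>V. V \<subset> U \<longrightarrow> y V = 0)"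
proof -
  have "finite {U. U \<subseteq> U0 \<and> y U \<noteq> 0}" "{U. U \<subseteq> U0 \<and> y U \<noteq> 0} \<noteq> {}"
    using assms by auto
  from finite_has_minimal[OF this] obtain U where U: "U \<in> {U. U \<subseteq> U0 \<and> y U \<noteq> 0}"
    and U_min: "\<forall>V \<in> {U. U \<subseteq> U0 \<and> y U \<noteq> 0}. V \<le> U \<longrightarrow> U = V"
    by blast
  moreover have "y V = 0" if "V \<subset> U" for V
    using U_min that U by (metis (mono_tags, lifting) mem_Collect_eq order.trans psubsetE)
  ultimately show ?thesis
    by blast
qed

lemma card_le_hrank_of_minimal_nonzero:
  assumes "y U \<noteq> 0" "\<And>V. V \<subset> U \<Longrightarrow> y V = 0"
    and "J \<subseteq> Pow U" "\<And>T. T \<in> J \<Longrightarrow> T \<in> Vset n e \<and> U - T \<in> Vset n e"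
  shows "card J \<le> hrank n e y"
proof -
  have "J \<subseteq> Vset n e"
    using assms(4) by blast
  moreover have "cols_independent (Vset n e) (H n e y) J"
  proof (rule cols_independent_triangular[where \<rho> = "\<lambda>T. U - T"])
    show "finite J"
      using \<open>J \<subseteq> Vset n e\<close> finite_Vset finite_subset by blast
    fix T T' assume "T \<in> J" "T' \<in> J"
    then have "T \<subseteq> U" "T' \<subseteq> U"
      using assms(3) by auto
    show "U - T \<in> Vset n e \<and> H n e y (U - T) T \<noteq> 0"
      using assms(1,4) \<open>T \<in> J\<close> \<open>T \<subseteq> U\<close> by (simp add: H_def Un_absorb2)
    assume "\<not> T \<le> T'"
    then have "(U - T) \<union> T' \<subset> U"
      using \<open>T \<subseteq> U\<close> \<open>T' \<subseteq> U\<close> by blast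
    then show "H n e y (U - T) T' = 0"
      using assms(2) by (simp add: H_def)
  qed
  ultimately show ?thesis
    unfolding hrank_def by (intro card_le_mat_rank finite_Vset)
qed

lemma pow_card_le_hrank:
  assumes "U \<subseteq> {1..n}" "y U \<noteq> 0" "\<And>V. V \<subset> U \<Longrightarrow> y V = 0"
  shows "2 ^ card U \<le> hrank n (card U) y"
proof -
  have "finite U"
    using assms(1) finite_subset by blast
  have "T \<in> Vset n (card U) \<and> U - T \<in> Vset n (card U)" if "T \<subseteq> U" for T
    using that assms(1) \<open>finite U\<close> by (auto simp: Vset_def intro: card_mono)
  then have "card (Pow U) \<le> hrank n (card U) y"
    using assms(2,3) by (intro card_le_hrank_of_minimal_nonzero) auto
  with \<open>finite U\<close> show ?thesis
    by (simp add: card_Pow)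
qed

lemma hrank_gt_of_half_card:
  assumes "U \<subseteq> {1..n}" "y U \<noteq> 0" "\<And>V. V \<subset> U \<Longrightarrow> y V = 0"
    and "k + 1 \<le> card U" "card U \<le> 2 * k"
  shows "k < hrank n k y"
proof -
  have "finite U"
    using assms(1) finite_subset by blast
  obtain A where A: "A \<subseteq> U" "card A = card U - k - 1"
    using obtain_subset_with_card_n[of "card U - k - 1" U] by auto
  have "finite A"
    using A(1) \<open>finite U\<close> finite_subset by blast
  define J where "J = (\<lambda>w. U - insert w A) ` (U - A)"
  have "inj_on (\<lambda>w. U - insert w A) (U - A)"
    by (rule inj_onI) blast
  then have "card J = k + 1"
    using A \<open>finite A\<close> assms(4) unfolding J_def by (simp add: card_image card_Diff_subset)
  moreover have "card J \<le> hrank n k y"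
  proof (rule card_le_hrank_of_minimal_nonzero[of y U, OF assms(2,3)])
    show "J \<subseteq> Pow U"
      unfolding J_def by blast
    fix T assume "T \<in> J"
    then obtain w where w: "w \<in> U - A" "T = U - insert w A"
      unfolding J_def by blast
    have "U - T = insert w A"
      using w A(1) by blast
    moreover have "card (insert w A) = card U - k" "card T = k"
      using w A \<open>finite A\<close> \<open>finite U\<close> assms(4) by (simp_all add: card_Diff_subset)
    ultimately show "T \<in> Vset n k \<and> U - T \<in> Vset n k"
      using w assms(1,5) A(1) unfolding Vset_def by auto
  qed
  ultimately show ?thesis
    by simp
qed

lemma ex_hrank_gt:
  assumes "d \<ge> 1" "\<exists>S\<in>Vset n d. \<exists>T\<in>Vset n d. H n d y S T \<noteq> 0"
  shows "\<exists>k\<le>d. k < hrank n k y"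
proof -
  obtain S T where ST: "S \<in> Vset n d" "T \<in> Vset n d" "y (S \<union> T) \<noteq> 0"
    using assms(2) by (auto simp: H_def)
  then have "S \<union> T \<subseteq> {1..n}" "card (S \<union> T) \<le> 2 * d"
    using card_Un_le[of S T] by (auto simp: Vset_def)
  moreover have "finite (S \<union> T)"
    using \<open>S \<union> T \<subseteq> {1..n}\<close> finite_subset by blast
  moreover obtain U where "U \<subseteq> S \<union> T" "y U \<noteq> 0" and U_min: "\<And>V. V \<subset> U \<Longrightarrow> y V = 0"
    using ex_minimal_nonzero_subset[of "S \<union> T" y, OF \<open>finite (S \<union> T)\<close> ST(3)] by blast
  ultimately have U: "U \<subseteq> {1..n}" "card U \<le> 2 * d" "y U \<noteq> 0"
    using card_mono[of "S \<union> T" U] by auto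
  show ?thesis
  proof (cases "card U \<le> 1")
    case True
    have "card U < hrank n (card U) y"
      using less_exp pow_card_le_hrank[where y = y, OF U(1,3) U_min] by (rule order.strict_trans2)
    with True assms(1) show ?thesis
      by (intro exI[of _ "card U"]) auto
  next
    case False
    with U show ?thesis
      by (intro exI[of _ "(card U + 1) div 2"] conjI hrank_gt_of_half_card[where y = y, OF U(1,3) U_min])
        auto
  qed
qed

lemma ex_plateau_of_mono:
  fixes r :: "nat \<Rightarrow> nat"
  assumes "\<And>e. r e \<le> r (Suc e)" "k \<le> d" "k < r k" "r d \<le> d"
  shows "\<exists>e\<in>{k..<d}. r e = r (Suc e) \<and> 0 < r e"
proof (rule ccontr)
  assume no_plateau: "\<not> ?thesis"
  have "k + j \<le> d \<Longrightarrow> k + j < r (k + j)" for j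
  proof (induction j)
    case (Suc j)
    then have "r (k + j) \<noteq> r (Suc (k + j))"
      using no_plateau by auto
    with Suc assms(1)[of "k + j"] show ?case
      by simp
  qed (use assms(3) in simp)
  from this[of "d - k"] assms(2,4) show False
    by simp
qed

theorem lemma4p3:
  fixes y :: "nat set \<Rightarrow> 'a::{finite,field}" and n d :: nat
  assumes "d \<ge> 1"
    and "\<exists>S\<in>Vset n d. \<exists>T\<in>Vset n d. H n d y S T \<noteq> 0"
    and "hrank n d y \<le> d"
  shows "\<exists>e\<in>{0..<d}. hrank n e y = hrank n (e+1) y \<and> hrank n e y > 0"
proof -
  obtain k where "k \<le> d" "k < hrank n k y"
    using ex_hrank_gt[OF assms(1,2)] by blast
  then have "\<exists>e\<in>{k..<d}. hrank n e y = hrank n (Suc e) y \<and> 0 < hrank n e y"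
    using assms(3) by (intro ex_plateau_of_mono hrank_mono) auto
  then show ?thesis
    by auto
qed

end
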